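(* Let $\mathfrak k$ be a finite-dimensional Lie algebra such that $Y(\mathfrak k)$ is a unique factorisation domain. Let $\lambda\neq0$ be the weight of a semi-invariant $x$ which is irreducible in $S(\mathfrak k)$. Then at least one of the $Y(\mathfrak k)$-modules $S(\mathfrak k)_\lambda$ and $S(\mathfrak k)_{-\lambda}$ is free of rank at most $1$.
   Context: For a finite-dimensional Lie algebra $\mathfrak k$ over an algebraically closed field $\mathbb C$ of characteristic $0$, the adjoint action extends to $S(\mathfrak k)$ by derivations. $Y(\mathfrak k)$ is the algebra of invariants; for $\mu\in\mathfrak k^*$, $S(\mathfrak k)_\mu=\{f\in S(\mathfrak k): x\cdot f=\mu(x)f\ \forall x\in\mathfrak k\}$, a $Y(\mathfrak k)$-module. A semi-invariant is a nonzero element of some $S(\mathfrak k)_\mu$, $\mu$ being its weight. *)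

theory Defs
  imports "HOL-Library.Poly_Mapping" "HOL-Algebra.Ring_Divisibility"
begin

text \<open>A Lie algebra k of dimension n over the complex numbers, given by its
structure constants w.r.t. a basis e_0,...,e_(n-1):
  [e_i, e_j] = sum over l < n of c i j l * e_l.\<close>

definition lie_structure :: "nat \<Rightarrow> (nat \<Rightarrow> nat \<Rightarrow> nat \<Rightarrow> complex) \<Rightarrow> bool" where
  "lie_structure n c \<longleftrightarrow>
     (\<forall>i<n. \<forall>l<n. c i i l = 0) \<and>
     (\<forall>i<n. \<forall>j<n. \<forall>l<n. c i j l = - c j i l) \<and>
     (\<forall>i<n. \<forall>j<n. \<forall>k<n. \<forall>m<n.
        (\<Sum>l<n. c i j l * c l k m + c j k l * c l i m + c k i l * c l j m) = 0)"

type_synonym cpoly = "(nat \<Rightarrow>\<^sub>0 nat) \<Rightarrow>\<^sub>0 complex"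

definition Var :: "nat \<Rightarrow> cpoly" where
  "Var k = Poly_Mapping.single (Poly_Mapping.single k 1) 1"

definition pdiff :: "nat \<Rightarrow> cpoly \<Rightarrow> cpoly" where
  "pdiff j f = (\<Sum>m\<in>Poly_Mapping.keys f.
      Poly_Mapping.single (m - Poly_Mapping.single j 1)
        (Poly_Mapping.lookup f m * of_nat (Poly_Mapping.lookup m j)))"

text \<open>The symmetric algebra S(k) = C[X_0,...,X_(n-1)] (X_i standing for e_i).\<close>
definition Salg :: "nat \<Rightarrow> cpoly set" where
  "Salg n = {f. \<forall>m\<in>Poly_Mapping.keys f. \<forall>j\<in>Poly_Mapping.keys m. j < n}"

text \<open>Adjoint action of e_i on S(k), the derivation extending ad e_i:
  e_i . X_j = sum_l c i j l X_l.\<close>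
definition adS :: "nat \<Rightarrow> (nat \<Rightarrow> nat \<Rightarrow> nat \<Rightarrow> complex) \<Rightarrow> nat \<Rightarrow> cpoly \<Rightarrow> cpoly" where
  "adS n c i f = (\<Sum>j<n. (\<Sum>l<n. Poly_Mapping.single 0 (c i j l) * Var l) * pdiff j f)"

text \<open>Weight space S(k)_mu, mu in k^* given by its values mu i = mu(e_i).
  By linearity the condition on all x in k reduces to the basis vectors.\<close>
definition weight_space :: "nat \<Rightarrow> (nat \<Rightarrow> nat \<Rightarrow> nat \<Rightarrow> complex) \<Rightarrow> (nat \<Rightarrow> complex) \<Rightarrow> cpoly set" where
  "weight_space n c mu = {f \<in> Salg n. \<forall>i<n. adS n c i f = Poly_Mapping.single 0 (mu i) * f}"

definition Yinv :: "nat \<Rightarrow> (nat \<Rightarrow> nat \<Rightarrow> nat \<Rightarrow> complex) \<Rightarrow> cpoly set" where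
  "Yinv n c = weight_space n c (\<lambda>_. 0)"

definition poly_ring :: "cpoly set \<Rightarrow> cpoly ring" where
  "poly_ring A = \<lparr>carrier = A, monoid.mult = (*), one = 1, zero = 0, add = (+)\<rparr>"

text \<open>M is a free A-module of rank at most 1 (rank 0: M = 0; rank 1: M = A g
  with g a basis element, i.e. a g = 0 implies a = 0).\<close>
definition free_rank_le_1 :: "cpoly set \<Rightarrow> cpoly set \<Rightarrow> bool" where
  "free_rank_le_1 A M \<longleftrightarrow> M = {0} \<or>
     (\<exists>g\<in>M. M = {a * g | a. a \<in> A} \<and> (\<forall>a\<in>A. a * g = 0 \<longrightarrow> a = 0))"

end

theory Submission
  imports Defs "HOL-Computational_Algebra.Polynomial"
begin

text \<open>
  Since S(k) is a polynomial ring, it is factorial, so the irreducible semi-invariant x is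
  prime in S(k). For a nonzero g of weight -\<lambda> the product x g is invariant, and one of its
  prime factors q in the factorial ring Y(k) is divisible by x in S(k); then q = x h with h of
  weight -\<lambda>, and g \<in> Y(k) h. If all primes of Y(k) divisible by x are associated, one h
  serves for every g, and S(k)_(-\<lambda>) = Y(k) h. Otherwise take non-associated such primes
  q1 = x h1 and q2 = x h2: for f of weight \<lambda> the invariants satisfy q2 (f h1) = q1 (f h2), so
  the prime q1 divides f h1 in Y(k), i.e. f \<in> Y(k) x, and S(k)_\<lambda> = Y(k) x.

  Factoriality of \<complex>[X_0, ..., X_(n-1)] is proved by induction on n: \<complex>[X_0, ..., X_n] is
  the ring of univariate polynomials in X_n over \<complex>[X_0, ..., X_(n-1)], and Gauss' lemma is
  proved for polynomials over a subring in which irreducibles are prime and a multiplicative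
  length function vanishes exactly on the units.
\<close>

abbreviation lookup where "lookup \<equiv> Poly_Mapping.lookup"
abbreviation keys where "keys \<equiv> Poly_Mapping.keys"
abbreviation single where "single \<equiv> Poly_Mapping.single"

section \<open>Singling out one variable\<close>

lemma lookup_mult_single:
  fixes c :: "('a::cancel_comm_monoid_add \<Rightarrow>\<^sub>0 'b::comm_semiring_1)"
  shows "lookup (c * single s b) m = (if \<exists>l. m = l + s then lookup c (m - s) * b else 0)"
proof -
  have "lookup (c * single s b) m = (\<Sum>l. lookup c l * (b when m = l + s))"
  proof -
    have "\<And>l. (\<Sum>q. lookup (single s b) q when m = l + q) = (b when m = l + s)"
    proof -
      fix l
      have "(\<Sum>q. lookup (single s b) q when m = l + q) = (\<Sum>q. (b when m = l + q) when s = q)"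
        by (rule Sum_any.cong) (simp add: lookup_single when_def)
      then show "(\<Sum>q. lookup (single s b) q when m = l + q) = (b when m = l + s)" by simp
    qed
    then show ?thesis by (simp add: lookup_mult)
  qed
  also have "\<dots> = (\<Sum>l. (lookup c l * b when l = m - s) when (\<exists>l. m = l + s))"
    by (rule Sum_any.cong) (auto simp: when_def)
  also have "\<dots> = (if \<exists>l. m = l + s then lookup c (m - s) * b else 0)"
    by (simp add: Sum_any_when_independent when_def)
  finally show ?thesis .
qed

lemma Var_power: "Var j ^ k = single (single j k) 1"
proof (induction k)
  case 0 then show ?case by simp
next
  case (Suc k)
  have "Var j ^ Suc k = Var j * Var j ^ k" by simp
  also have "\<dots> = single (single j 1) 1 * single (single j k) 1" unfolding Suc.IH by (simp add: Var_def)
  also have "\<dots> = single (single j (Suc k)) 1" by (simp add: mult_single single_add[symmetric])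
  finally show ?case .
qed

lemma exists_add_single_iff:
  fixes m :: "nat \<Rightarrow>\<^sub>0 nat"
  shows "(\<exists>l. m = l + single j k) \<longleftrightarrow> k \<le> lookup m j"
proof
  assume "\<exists>l. m = l + single j k"
  then obtain l where "m = l + single j k" by blast
  then show "k \<le> lookup m j" by (simp add: lookup_add)
next
  assume a: "k \<le> lookup m j"
  have "m = (m - single j k) + single j k"
    by (rule poly_mapping_eqI) (use a in \<open>auto simp: lookup_add lookup_minus lookup_single when_def\<close>)
  then show "\<exists>l. m = l + single j k" by blast
qed

lemma lookup_mult_Var_power:
  "lookup (c * Var j ^ k) m = (if k \<le> lookup m j then lookup c (m - single j k) else 0)"
  by (simp add: Var_power lookup_mult_single exists_add_single_iff)

definition free_of :: "nat \<Rightarrow> cpoly set" where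
  "free_of j = {f. \<forall>m\<in>keys f. lookup m j = 0}"

definition poly_Var :: "nat \<Rightarrow> cpoly poly \<Rightarrow> cpoly" where
  "poly_Var j p = poly p (Var j)"

definition polys_free_of :: "nat \<Rightarrow> cpoly poly set" where
  "polys_free_of j = {p. \<forall>i. coeff p i \<in> free_of j}"

lemma lookup_free_of_eq_0: "c \<in> free_of j \<Longrightarrow> lookup m j \<noteq> 0 \<Longrightarrow> lookup c m = 0"
proof -
  assume "c \<in> free_of j" "lookup m j \<noteq> 0"
  then have "m \<notin> keys c" unfolding free_of_def by auto
  then show ?thesis by (simp add: in_keys_iff)
qed

lemma lookup_mult_Var_power_free_of:
  assumes "c \<in> free_of j"
  shows "lookup (c * Var j ^ k) m = (if lookup m j = k then lookup c (m - single j k) else 0)"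
proof (cases "k \<le> lookup m j")
  case True
  show ?thesis
  proof (cases "lookup m j = k")
    case False
    then have "lookup (m - single j k) j \<noteq> 0" using True by (simp add: lookup_minus)
    then show ?thesis using lookup_free_of_eq_0[OF assms] False by (simp add: lookup_mult_Var_power)
  qed (simp add: lookup_mult_Var_power)
next
  case False
  then have "lookup m j \<noteq> k" by simp
  with False show ?thesis by (simp add: lookup_mult_Var_power)
qed

lemma lookup_poly_Var:
  assumes "p \<in> polys_free_of j"
  shows "lookup (poly_Var j p) m = lookup (coeff p (lookup m j)) (m - single j (lookup m j))"
proof -
  have "lookup (poly_Var j p) m = (\<Sum>i\<le>degree p. lookup (coeff p i * Var j ^ i) m)"
    by (simp add: poly_Var_def poly_altdef lookup_sum)
  also have "\<dots> = (\<Sum>i\<le>degree p. if lookup m j = i then lookup (coeff p i) (m - single j i) else 0)"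
    using assms by (intro sum.cong refl) (simp add: polys_free_of_def lookup_mult_Var_power_free_of)
  also have "\<dots> = (if lookup m j \<le> degree p
      then lookup (coeff p (lookup m j)) (m - single j (lookup m j)) else 0)"
    by (simp add: sum.delta)
  also have "\<dots> = lookup (coeff p (lookup m j)) (m - single j (lookup m j))"
    by (auto simp: coeff_eq_0)
  finally show ?thesis .
qed

lemma free_of_0[simp]: "0 \<in> free_of j" by (simp add: free_of_def)

lemma free_of_const[simp]: "single 0 a \<in> free_of j" by (simp add: free_of_def)

lemma free_of_1[simp]: "1 \<in> free_of j" by (simp add: free_of_def)

lemma free_of_add: assumes "a \<in> free_of j" "b \<in> free_of j" shows "a + b \<in> free_of j"
proof -
  have "\<forall>m\<in>keys (a + b). lookup m j = 0"
  proof
    fix m assume "m \<in> keys (a + b)"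
    then have "m \<in> keys a \<or> m \<in> keys b" using keys_add[of a b] by blast
    then show "lookup m j = 0" using assms unfolding free_of_def by blast
  qed
  then show ?thesis by (simp add: free_of_def)
qed

lemma free_of_mult: assumes a: "a \<in> free_of j" and b: "b \<in> free_of j" shows "a * b \<in> free_of j"
proof -
  have "\<forall>m\<in>keys (a * b). lookup m j = 0"
  proof
    fix m assume "m \<in> keys (a * b)"
    then obtain u v where "u \<in> keys a" "v \<in> keys b" "m = u + v" using keys_mult[of a b] by blast
    then show "lookup m j = 0" using a b by (simp add: free_of_def lookup_add)
  qed
  then show ?thesis by (simp add: free_of_def)
qed

lemma free_of_sum: "(\<And>i. i \<in> A \<Longrightarrow> f i \<in> free_of j) \<Longrightarrow> sum f A \<in> free_of j"
proof (induction A rule: infinite_finite_induct)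
  case (insert x F)
  then show ?case by (simp add: free_of_add)
qed simp_all

lemma free_of_of_nat[simp]: "of_nat k \<in> free_of j"
  using free_of_const[of "of_nat k" j] by (simp only: single_of_nat)

lemma polys_free_of_mult: "p \<in> polys_free_of j \<Longrightarrow> q \<in> polys_free_of j \<Longrightarrow> p * q \<in> polys_free_of j"
  unfolding polys_free_of_def by (simp add: coeff_mult free_of_sum free_of_mult)

lemma polys_free_of_pderiv: "p \<in> polys_free_of j \<Longrightarrow> pderiv p \<in> polys_free_of j"
  unfolding polys_free_of_def by (simp add: coeff_pderiv free_of_mult del: of_nat_Suc)

lemma poly_Var_inj:
  assumes "p \<in> polys_free_of j" "q \<in> polys_free_of j" "poly_Var j p = poly_Var j q"
  shows "p = q"
proof (rule poly_eqI, rule poly_mapping_eqI)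
  fix i m
  show "lookup (coeff p i) m = lookup (coeff q i) m"
  proof (cases "lookup m j = 0")
    case True
    define m' where "m' = m + single j i"
    have "lookup m' j = i" using True by (simp add: m'_def lookup_add)
    moreover have "m' - single j i = m" by (simp add: m'_def)
    note eqs = \<open>lookup m' j = i\<close> \<open>m' - single j i = m\<close>
    have "lookup (poly_Var j p) m' = lookup (coeff p i) m"
      using lookup_poly_Var[OF assms(1), of m'] eqs by simp
    moreover have "lookup (poly_Var j q) m' = lookup (coeff q i) m"
      using lookup_poly_Var[OF assms(2), of m'] eqs by simp
    ultimately show ?thesis using assms(3) by simp
  next
    case False
    then show ?thesis
      using assms(1,2) lookup_free_of_eq_0[of "coeff p i" j m] lookup_free_of_eq_0[of "coeff q i" j m]
      by (simp add: polys_free_of_def)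
  qed
qed

lemma poly_Var_mult: "poly_Var j (p * q) = poly_Var j p * poly_Var j q" by (simp add: poly_Var_def)

lemma poly_Var_add: "poly_Var j (p + q) = poly_Var j p + poly_Var j q" by (simp add: poly_Var_def)

definition Var_coeff :: "nat \<Rightarrow> nat \<Rightarrow> cpoly \<Rightarrow> cpoly" where
  "Var_coeff j k f = Abs_poly_mapping (\<lambda>m. if lookup m j = 0 then lookup f (m + single j k) else 0)"

lemma lookup_Var_coeff: "lookup (Var_coeff j k f) m = (if lookup m j = 0 then lookup f (m + single j k) else 0)"
proof -
  have "{m. (if lookup m j = 0 then lookup f (m + single j k) else 0) \<noteq> 0}
      \<subseteq> (\<lambda>m'. m' - single j k) ` keys f"
  proof
    fix m assume "m \<in> {m. (if lookup m j = 0 then lookup f (m + single j k) else 0) \<noteq> 0}"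
    then have "m + single j k \<in> keys f" by (simp add: in_keys_iff split: if_splits)
    moreover have "m = (m + single j k) - single j k" by simp
    ultimately show "m \<in> (\<lambda>m'. m' - single j k) ` keys f" by blast
  qed
  then have "finite {m. (if lookup m j = 0 then lookup f (m + single j k) else 0) \<noteq> 0}"
    using finite_surj[OF finite_keys] by blast
  then show ?thesis unfolding Var_coeff_def by simp
qed

definition poly_in_Var :: "nat \<Rightarrow> cpoly \<Rightarrow> cpoly poly" where
  "poly_in_Var j f = (\<Sum>k\<le>Max (insert 0 ((\<lambda>m. lookup m j) ` keys f)). monom (Var_coeff j k f) k)"

lemma Var_coeff_eq_0_large:
  assumes "\<not> k \<le> Max (insert 0 ((\<lambda>m. lookup m j) ` keys f))"
  shows "Var_coeff j k f = 0"
proof (rule poly_mapping_eqI)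
  fix m
  show "lookup (Var_coeff j k f) m = lookup 0 m"
  proof (cases "lookup m j = 0")
    case True
    have "m + single j k \<notin> keys f"
    proof
      assume "m + single j k \<in> keys f"
      then have "lookup (m + single j k) j \<le> Max (insert 0 ((\<lambda>m. lookup m j) ` keys f))"
        by (intro Max_ge) auto
      then show False using assms True by (simp add: lookup_add)
    qed
    then show ?thesis by (simp add: lookup_Var_coeff in_keys_iff)
  qed (simp add: lookup_Var_coeff)
qed

lemma coeff_poly_in_Var: "coeff (poly_in_Var j f) k = Var_coeff j k f"
proof (cases "k \<le> Max (insert 0 ((\<lambda>m. lookup m j) ` keys f))")
  case True
  then show ?thesis unfolding poly_in_Var_def coeff_sum coeff_monom by (simp add: sum.delta)
next
  case False
  then have "Var_coeff j k f = 0" by (rule Var_coeff_eq_0_large)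
  then show ?thesis using False unfolding poly_in_Var_def coeff_sum coeff_monom by (simp add: sum.delta)
qed

lemma poly_in_Var_polys_free_of: "poly_in_Var j f \<in> polys_free_of j"
proof -
  have "Var_coeff j k f \<in> free_of j" for k
    unfolding free_of_def by (auto simp: in_keys_iff lookup_Var_coeff split: if_splits)
  then show ?thesis by (simp add: polys_free_of_def coeff_poly_in_Var)
qed

lemma minus_single_lookup_add:
  fixes m :: "nat \<Rightarrow>\<^sub>0 nat"
  shows "(m - single j (lookup m j)) + single j (lookup m j) = m"
  by (rule poly_mapping_eqI) (simp add: lookup_add lookup_minus lookup_single when_def)

lemma poly_Var_poly_in_Var: "poly_Var j (poly_in_Var j f) = f"
proof (rule poly_mapping_eqI)
  fix m :: "nat \<Rightarrow>\<^sub>0 nat"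
  have "lookup (m - single j (lookup m j)) j = 0" by (simp add: lookup_minus)
  then show "lookup (poly_Var j (poly_in_Var j f)) m = lookup f m"
    by (simp add: lookup_poly_Var[OF poly_in_Var_polys_free_of] coeff_poly_in_Var lookup_Var_coeff
        minus_single_lookup_add)
qed

lemma poly_Var_surj: "\<exists>p\<in>polys_free_of j. poly_Var j p = f"
  using poly_in_Var_polys_free_of poly_Var_poly_in_Var by blast

lemma Salg_free_of: assumes "f \<in> Salg n" shows "f \<in> free_of n"
proof -
  have "\<forall>m\<in>keys f. lookup m n = 0"
  proof
    fix m assume "m \<in> keys f"
    then have "n \<notin> keys m" using assms unfolding Salg_def by blast
    then show "lookup m n = 0" by (simp add: in_keys_iff)
  qed
  then show ?thesis by (simp add: free_of_def)
qed

lemma SalgD: "f \<in> Salg n \<Longrightarrow> m \<in> keys f \<Longrightarrow> i \<in> keys m \<Longrightarrow> i < n"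
  unfolding Salg_def by auto

lemma Salg_0[simp]: "0 \<in> Salg n" by (simp add: Salg_def)

lemma Salg_const[simp]: "single 0 a \<in> Salg n" by (simp add: Salg_def)

lemma Salg_1[simp]: "1 \<in> Salg n" by (simp add: Salg_def)

lemma Salg_add: assumes "a \<in> Salg n" "b \<in> Salg n" shows "a + b \<in> Salg n"
proof -
  have "\<forall>m\<in>keys (a + b). \<forall>i\<in>keys m. i < n"
  proof
    fix m assume "m \<in> keys (a + b)"
    then have "m \<in> keys a \<or> m \<in> keys b" using keys_add[of a b] by blast
    then show "\<forall>i\<in>keys m. i < n"
    proof
      assume "m \<in> keys a" then show ?thesis using SalgD[OF assms(1)] by blast
    next
      assume "m \<in> keys b" then show ?thesis using SalgD[OF assms(2)] by blast
    qed
  qed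
  then show ?thesis by (simp add: Salg_def)
qed

lemma Salg_uminus: assumes "a \<in> Salg n" shows "- a \<in> Salg n"
proof -
  have "keys (- a) = keys a" by (simp add: in_keys_iff set_eq_iff)
  then show ?thesis using assms by (simp add: Salg_def)
qed

lemma Salg_mult: assumes a: "a \<in> Salg n" and b: "b \<in> Salg n" shows "a * b \<in> Salg n"
proof -
  have "\<forall>m\<in>keys (a * b). \<forall>i\<in>keys m. i < n"
  proof
    fix m assume "m \<in> keys (a * b)"
    then obtain u v where uv: "u \<in> keys a" "v \<in> keys b" "m = u + v" using keys_mult[of a b] by blast
    have "keys m \<subseteq> keys u \<union> keys v" unfolding uv(3) by (rule keys_add)
    then show "\<forall>i\<in>keys m. i < n" using SalgD[OF a uv(1)] SalgD[OF b uv(2)] by auto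
  qed
  then show ?thesis by (simp add: Salg_def)
qed

lemma poly_Var_Salg_Suc:
  assumes "\<forall>i. coeff p i \<in> Salg n"
  shows "poly_Var n p \<in> Salg (Suc n)"
proof -
  have pA: "p \<in> polys_free_of n" using assms Salg_free_of by (simp add: polys_free_of_def)
  have "\<forall>m\<in>keys (poly_Var n p). \<forall>i\<in>keys m. i < Suc n"
  proof (intro ballI)
    fix m i assume m: "m \<in> keys (poly_Var n p)" and i: "i \<in> keys m"
    show "i < Suc n"
    proof (cases "i = n")
      case False
      have "m - single n (lookup m n) \<in> keys (coeff p (lookup m n))"
        using m by (simp add: in_keys_iff lookup_poly_Var[OF pA])
      moreover have "i \<in> keys (m - single n (lookup m n))"
        using i False by (simp add: in_keys_iff lookup_minus lookup_single)
      ultimately have "i < n" using assms SalgD by blast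
      then show ?thesis by simp
    qed simp
  qed
  then show ?thesis by (simp add: Salg_def)
qed

lemma coeff_poly_in_Var_Salg:
  assumes "f \<in> Salg (Suc n)"
  shows "coeff (poly_in_Var n f) k \<in> Salg n"
proof -
  have "\<forall>m\<in>keys (Var_coeff n k f). \<forall>i\<in>keys m. i < n"
  proof (intro ballI)
    fix m i assume m: "m \<in> keys (Var_coeff n k f)" and i: "i \<in> keys m"
    have mn: "lookup m n = 0" and mk: "m + single n k \<in> keys f"
      using m by (auto simp: in_keys_iff lookup_Var_coeff split: if_splits)
    have "i \<in> keys (m + single n k)" using i by (simp add: in_keys_iff lookup_add)
    then have "i < Suc n" using SalgD[OF assms mk] by blast
    moreover have "i \<noteq> n" using i mn by (auto simp: in_keys_iff)
    ultimately show "i < n" by simp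
  qed
  then show ?thesis by (simp add: Salg_def coeff_poly_in_Var)
qed

section \<open>Polynomials over a subring with unique factorisation\<close>

definition divides_in :: "'a::comm_ring_1 set \<Rightarrow> 'a \<Rightarrow> 'a \<Rightarrow> bool" where
  "divides_in R a b \<longleftrightarrow> (\<exists>c\<in>R. b = a * c)"

definition unit_in :: "'a::comm_ring_1 set \<Rightarrow> 'a \<Rightarrow> bool" where
  "unit_in R a \<longleftrightarrow> a \<in> R \<and> (\<exists>b\<in>R. a * b = 1)"

definition irreducible_in :: "'a::comm_ring_1 set \<Rightarrow> 'a \<Rightarrow> bool" where
  "irreducible_in R p \<longleftrightarrow> p \<in> R \<and> p \<noteq> 0 \<and> \<not> unit_in R p \<and>
     (\<forall>a\<in>R. \<forall>b\<in>R. p = a * b \<longrightarrow> unit_in R a \<or> unit_in R b)"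

definition prime_in :: "'a::comm_ring_1 set \<Rightarrow> 'a \<Rightarrow> bool" where
  "prime_in R p \<longleftrightarrow> p \<in> R \<and> p \<noteq> 0 \<and> \<not> unit_in R p \<and>
     (\<forall>a\<in>R. \<forall>b\<in>R. divides_in R p (a * b) \<longrightarrow> divides_in R p a \<or> divides_in R p b)"

definition is_subring :: "'a::comm_ring_1 set \<Rightarrow> bool" where
  "is_subring R \<longleftrightarrow> 0 \<in> R \<and> 1 \<in> R \<and> (\<forall>a\<in>R. \<forall>b\<in>R. a + b \<in> R \<and> a * b \<in> R \<and> - a \<in> R)"

definition polys_over :: "'a::comm_ring_1 set \<Rightarrow> 'a poly set" where
  "polys_over R = {p. \<forall>i. coeff p i \<in> R}"

text \<open>
  The length \<mu> plays the role of the number of prime factors: it makes induction on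
  factorisations possible without constructing them.
\<close>

locale factorial_subring =
  fixes R :: "'a::idom set" and \<mu> :: "'a \<Rightarrow> nat"
  assumes is_subring: "is_subring R"
    and irreducible_imp_prime: "\<And>p. irreducible_in R p \<Longrightarrow> prime_in R p"
    and length_mult: "\<And>a b. a \<in> R \<Longrightarrow> b \<in> R \<Longrightarrow> a \<noteq> 0 \<Longrightarrow> b \<noteq> 0 \<Longrightarrow> \<mu> (a * b) = \<mu> a + \<mu> b"
    and length_eq_0_iff: "\<And>a. a \<in> R \<Longrightarrow> a \<noteq> 0 \<Longrightarrow> \<mu> a = 0 \<longleftrightarrow> unit_in R a"
begin

lemma subring_zero[simp]: "0 \<in> R" using is_subring by (simp add: is_subring_def)

lemma subring_one[simp]: "1 \<in> R" using is_subring by (simp add: is_subring_def)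

lemma subring_add[intro]: "a \<in> R \<Longrightarrow> b \<in> R \<Longrightarrow> a + b \<in> R"
  using is_subring by (simp add: is_subring_def)

lemma subring_mult[intro]: "a \<in> R \<Longrightarrow> b \<in> R \<Longrightarrow> a * b \<in> R"
  using is_subring by (simp add: is_subring_def)

lemma subring_uminus[intro]: "a \<in> R \<Longrightarrow> - a \<in> R"
  using is_subring by (simp add: is_subring_def)

lemma subring_diff[intro]: "a \<in> R \<Longrightarrow> b \<in> R \<Longrightarrow> a - b \<in> R"
  unfolding diff_conv_add_uminus by (intro subring_add subring_uminus)

lemma subring_power[intro]: "a \<in> R \<Longrightarrow> a ^ k \<in> R"
  by (induction k) auto

lemma subring_sum[intro]: "(\<And>i. i \<in> A \<Longrightarrow> f i \<in> R) \<Longrightarrow> sum f A \<in> R"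
proof (induction A rule: infinite_finite_induct)
  case (insert x F) then show ?case by (simp add: subring_add)
qed simp_all

lemma coeff_polys_over: "p \<in> polys_over R \<Longrightarrow> coeff p i \<in> R"
  by (simp add: polys_over_def)

lemma polys_over_0[simp]: "0 \<in> polys_over R" by (simp add: polys_over_def)

lemma polys_over_const_iff[simp]: "[:c:] \<in> polys_over R \<longleftrightarrow> c \<in> R"
  by (auto simp: polys_over_def coeff_pCons split: nat.splits)

lemma polys_over_1[simp]: "1 \<in> polys_over R"
  using polys_over_const_iff[of 1] by (simp add: one_pCons)

lemma polys_over_add[intro]: "p \<in> polys_over R \<Longrightarrow> q \<in> polys_over R \<Longrightarrow> p + q \<in> polys_over R"
  by (simp add: polys_over_def subring_add)

lemma polys_over_uminus[intro]: "p \<in> polys_over R \<Longrightarrow> - p \<in> polys_over R"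
  by (simp add: polys_over_def subring_uminus)

lemma polys_over_diff[intro]: "p \<in> polys_over R \<Longrightarrow> q \<in> polys_over R \<Longrightarrow> p - q \<in> polys_over R"
  by (simp add: polys_over_def subring_diff)

lemma polys_over_mult[intro]:
  assumes "p \<in> polys_over R" "q \<in> polys_over R" shows "p * q \<in> polys_over R"
proof -
  have "coeff (p * q) i \<in> R" for i
    unfolding coeff_mult by (intro subring_sum subring_mult coeff_polys_over assms)
  then show ?thesis by (simp add: polys_over_def)
qed

lemma polys_over_smult[intro]: "c \<in> R \<Longrightarrow> p \<in> polys_over R \<Longrightarrow> smult c p \<in> polys_over R"
  by (simp add: polys_over_def subring_mult)

lemma polys_over_monom[intro]: "c \<in> R \<Longrightarrow> monom c d \<in> polys_over R"
  by (simp add: polys_over_def)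

lemma lead_coeff_mem: "p \<in> polys_over R \<Longrightarrow> lead_coeff p \<in> R"
  by (simp add: coeff_polys_over)

lemma unit_in_polys_over_iff:
  "unit_in (polys_over R) p \<longleftrightarrow> p \<in> polys_over R \<and> degree p = 0 \<and> unit_in R (coeff p 0)"
proof
  assume u: "unit_in (polys_over R) p"
  then obtain q where q: "q \<in> polys_over R" "p * q = 1" "p \<in> polys_over R" by (auto simp: unit_in_def)
  then have "p \<noteq> 0" "q \<noteq> 0" by auto
  then have "degree p + degree q = 0" using q(2) degree_mult_eq[of p q] by simp
  then have d: "degree p = 0" "degree q = 0" by auto
  have "coeff (p * q) 0 = coeff p 0 * coeff q 0" by (simp add: coeff_mult)
  then have "coeff p 0 * coeff q 0 = 1" using q(2) by simp
  then show "p \<in> polys_over R \<and> degree p = 0 \<and> unit_in R (coeff p 0)"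
    using q d by (auto simp: unit_in_def coeff_polys_over)
next
  assume a: "p \<in> polys_over R \<and> degree p = 0 \<and> unit_in R (coeff p 0)"
  then obtain b where b: "b \<in> R" "coeff p 0 * b = 1" by (auto simp: unit_in_def)
  have e: "p = [:coeff p 0:]" using a degree_0_id[of p] by simp
  have "p * [:b:] = [:coeff p 0:] * [:b:]" using e by (rule arg_cong)
  also have "\<dots> = 1" using b by (simp add: one_pCons mult.commute)
  finally have "p * [:b:] = 1" .
  then show "unit_in (polys_over R) p" unfolding unit_in_def using a b(1) polys_over_const_iff[of b] by blast
qed

lemma divides_in_0: "divides_in R a 0"
  unfolding divides_in_def by (rule bexI[of _ 0]) auto

lemma divides_in_add: assumes "divides_in R a b" "divides_in R a c" shows "divides_in R a (b + c)"
proof -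
  obtain c1 c2 where "c1 \<in> R" "b = a * c1" "c2 \<in> R" "c = a * c2" using assms unfolding divides_in_def by blast
  then have "c1 + c2 \<in> R" "b + c = a * (c1 + c2)" by (auto simp: distrib_left)
  then show ?thesis unfolding divides_in_def by blast
qed

lemma divides_in_uminus: "divides_in R a b \<Longrightarrow> divides_in R a (- b)"
  unfolding divides_in_def by (auto intro!: bexI[of _ "- c" for c] subring_uminus)

lemma divides_in_diff: "divides_in R a b \<Longrightarrow> divides_in R a c \<Longrightarrow> divides_in R a (b - c)"
  unfolding diff_conv_add_uminus by (intro divides_in_add divides_in_uminus)

lemma divides_in_mult_right: "divides_in R a b \<Longrightarrow> c \<in> R \<Longrightarrow> divides_in R a (b * c)"
  unfolding divides_in_def by (auto intro!: bexI[of _ "d * c" for d] subring_mult)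

lemma divides_in_mult_left: "divides_in R a b \<Longrightarrow> c \<in> R \<Longrightarrow> divides_in R a (c * b)"
  using divides_in_mult_right by (simp add: mult.commute)

lemma divides_in_sum: "(\<And>i. i \<in> A \<Longrightarrow> divides_in R a (f i)) \<Longrightarrow> divides_in R a (sum f A)"
proof (induction A rule: infinite_finite_induct)
  case (insert x F) then show ?case by (simp add: divides_in_add)
qed (simp_all add: divides_in_0)

lemma divides_in_times: "a \<in> R \<Longrightarrow> c \<in> R \<Longrightarrow> divides_in R a (a * c)"
  unfolding divides_in_def by blast

lemma exists_prime_factor:
  "a \<in> R \<Longrightarrow> a \<noteq> 0 \<Longrightarrow> \<not> unit_in R a \<Longrightarrow> \<exists>p c. prime_in R p \<and> c \<in> R \<and> a = p * c \<and> \<mu> c < \<mu> a"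
proof (induction "\<mu> a" arbitrary: a rule: less_induct)
  case less
  show ?case
  proof (cases "irreducible_in R a")
    case True
    have "\<mu> 1 = 0" using length_eq_0_iff[of 1] by (simp add: unit_in_def)
    moreover have "\<mu> a \<noteq> 0" using length_eq_0_iff[OF less.prems(1,2)] less.prems(3) by simp
    ultimately show ?thesis using irreducible_imp_prime[OF True] by (intro exI[of _ a] exI[of _ 1]) simp
  next
    case False
    then obtain x y where xy: "x \<in> R" "y \<in> R" "a = x * y" "\<not> unit_in R x" "\<not> unit_in R y"
      using less.prems unfolding irreducible_in_def by blast
    have x0: "x \<noteq> 0" and y0: "y \<noteq> 0" using xy(3) less.prems(2) by auto
    have "\<mu> y \<noteq> 0" using length_eq_0_iff[OF xy(2) y0] xy(5) by simp
    then have "\<mu> x < \<mu> a" using length_mult[OF xy(1,2) x0 y0] xy(3) by simp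
    from less.hyps[OF this xy(1) x0 xy(4)] obtain p c where
      pc: "prime_in R p" "c \<in> R" "x = p * c" "\<mu> c < \<mu> x" by blast
    have c0: "c \<noteq> 0" using pc(3) x0 by auto
    have "a = p * (c * y)" using pc(3) xy(3) by (simp add: mult.assoc)
    moreover have "\<mu> (c * y) < \<mu> a"
      using length_mult[OF pc(2) xy(2) c0 y0] length_mult[OF xy(1,2) x0 y0] xy(3) pc(4) by simp
    ultimately show ?thesis using pc(1,2) xy(2) by (intro exI[of _ p] exI[of _ "c * y"]) auto
  qed
qed

lemma prime_divides_coeffs_mult:
  assumes p: "prime_in R p" and a: "a \<in> polys_over R" and b: "b \<in> polys_over R"
    and ab: "\<forall>i. divides_in R p (coeff (a * b) i)"
  shows "(\<forall>i. divides_in R p (coeff a i)) \<or> (\<forall>i. divides_in R p (coeff b i))"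
proof (rule ccontr)
  assume "\<not> ?thesis"
  then obtain i0 j0 where "\<not> divides_in R p (coeff a i0)" "\<not> divides_in R p (coeff b j0)" by blast
  define i where "i = (LEAST i. \<not> divides_in R p (coeff a i))"
  define j where "j = (LEAST j. \<not> divides_in R p (coeff b j))"
  have ni: "\<not> divides_in R p (coeff a i)" unfolding i_def by (rule LeastI) fact
  have nj: "\<not> divides_in R p (coeff b j)" unfolding j_def by (rule LeastI) fact
  have li: "divides_in R p (coeff a k)" if "k < i" for k using not_less_Least[OF that[unfolded i_def]] i_def by blast
  have lj: "divides_in R p (coeff b k)" if "k < j" for k using not_less_Least[OF that[unfolded j_def]] j_def by blast
  have fin: "finite {..i + j}" by simp
  have iin: "i \<in> {..i + j}" by simp
  have "coeff (a * b) (i + j) =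
      coeff a i * coeff b (i + j - i) + (\<Sum>k\<in>{..i + j} - {i}. coeff a k * coeff b (i + j - k))"
    unfolding coeff_mult by (rule sum.remove[OF fin iin])
  moreover have "divides_in R p (\<Sum>k\<in>{..i + j} - {i}. coeff a k * coeff b (i + j - k))"
  proof (rule divides_in_sum)
    fix k assume k: "k \<in> {..i + j} - {i}"
    show "divides_in R p (coeff a k * coeff b (i + j - k))"
    proof (cases "k < i")
      case True
      then show ?thesis using li[OF True] by (intro divides_in_mult_right coeff_polys_over b)
    next
      case False
      then have "i + j - k < j" using k by auto
      then show ?thesis using lj by (intro divides_in_mult_left coeff_polys_over a) auto
    qed
  qed
  ultimately have "divides_in R p (coeff a i * coeff b j)"
    using divides_in_diff[OF ab[rule_format, of "i + j"]] by fastforce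
  then show False using p ni nj coeff_polys_over[OF a] coeff_polys_over[OF b] unfolding prime_in_def by blast
qed

lemma smult_of_divides_coeffs:
  assumes c: "c \<in> R" "c \<noteq> 0" and a: "a \<in> polys_over R" and d: "\<forall>i. divides_in R c (coeff a i)"
  shows "\<exists>a'\<in>polys_over R. a = smult c a'"
proof -
  define f where "f x = (SOME d. d \<in> R \<and> x = c * d)" for x
  have f: "f x \<in> R \<and> x = c * f x" if "divides_in R c x" for x
    using that unfolding f_def divides_in_def by (metis (mono_tags, lifting) someI_ex)
  have f0: "f 0 = 0" using f[OF divides_in_0] c(2) by simp
  define a' where "a' = Poly (map f (coeffs a))"
  have ca: "coeff a' i = f (coeff a i)" for i
    unfolding a'_def coeff_Poly_eq nth_default_map_eq[of f 0 0, OF f0] nth_default_coeffs_eq ..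
  have "a' \<in> polys_over R" using f d by (simp add: polys_over_def ca)
  moreover have "a = smult c a'"
    by (rule poly_eqI) (use f d in \<open>simp add: ca\<close>)
  ultimately show ?thesis by blast
qed

lemma irreducible_coeffs_not_divisible:
  assumes f: "irreducible_in (polys_over R) f" and df: "degree f > 0" and p: "prime_in R p"
  shows "\<not> (\<forall>i. divides_in R p (coeff f i))"
proof
  assume d: "\<forall>i. divides_in R p (coeff f i)"
  have pR: "p \<in> R" "p \<noteq> 0" "\<not> unit_in R p" using p by (auto simp: prime_in_def)
  have fPR: "f \<in> polys_over R" using f by (simp add: irreducible_in_def)
  obtain f' where f': "f' \<in> polys_over R" "f = smult p f'" using smult_of_divides_coeffs[OF pR(1,2) fPR d] by blast
  have "f = [:p:] * f'" using f'(2) by simp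
  moreover have "[:p:] \<in> polys_over R" using pR by simp
  ultimately have "unit_in (polys_over R) [:p:] \<or> unit_in (polys_over R) f'"
    using f f'(1) unfolding irreducible_in_def by blast
  moreover have "\<not> unit_in (polys_over R) [:p:]" using pR(3) by (simp add: unit_in_polys_over_iff)
  moreover have "degree f' = degree f" using f'(2) pR(2) by simp
  then have "\<not> unit_in (polys_over R) f'" using df by (simp add: unit_in_polys_over_iff)
  ultimately show False by blast
qed

lemma divides_coeff_smult:
  assumes "c \<in> R" "p \<in> R" "g \<in> polys_over R" "smult c g = h" "divides_in R p c"
  shows "divides_in R p (coeff h i)"
proof -
  have "coeff h i = c * coeff g i" using assms(4) by auto
  then show ?thesis using divides_in_mult_right[OF assms(5) coeff_polys_over[OF assms(3)]] by simp
qed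

text \<open>
  Gauss' lemma: the prime factors of c are cancelled one at a time; each divides all
  coefficients of k because it cannot divide all coefficients of f.
\<close>

lemma divides_in_of_smult_eq_mult:
  assumes f: "irreducible_in (polys_over R) f" and df: "degree f > 0"
  shows "c \<in> R \<Longrightarrow> c \<noteq> 0 \<Longrightarrow> g \<in> polys_over R \<Longrightarrow> k \<in> polys_over R \<Longrightarrow> smult c g = f * k \<Longrightarrow>
    divides_in (polys_over R) f g"
proof (induction "\<mu> c" arbitrary: c k rule: less_induct)
  case less
  have fPR: "f \<in> polys_over R" using f by (simp add: irreducible_in_def)
  show ?case
  proof (cases "unit_in R c")
    case True
    then obtain c' where c': "c' \<in> R" "c * c' = 1" by (auto simp: unit_in_def)
    have "g = smult c' (smult c g)" using c'(2) by (simp add: mult.commute)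
    also have "\<dots> = f * smult c' k" using less.prems(5) by simp
    finally show ?thesis unfolding divides_in_def using c'(1) less.prems(4) by blast
  next
    case False
    obtain p c0 where pc: "prime_in R p" "c0 \<in> R" "c = p * c0" "\<mu> c0 < \<mu> c"
      using exists_prime_factor[OF less.prems(1,2) False] by blast
    have pR: "p \<in> R" "p \<noteq> 0" using pc(1) by (auto simp: prime_in_def)
    have c00: "c0 \<noteq> 0" using pc(3) less.prems(2) by auto
    have "divides_in R p (coeff (f * k) i)" for i
      using divides_coeff_smult[OF less.prems(1) pR(1) less.prems(3) less.prems(5)] pc(2,3) pR(1)
      by (simp add: divides_in_times)
    then have "(\<forall>i. divides_in R p (coeff f i)) \<or> (\<forall>i. divides_in R p (coeff k i))"
      using prime_divides_coeffs_mult[OF pc(1) fPR less.prems(4)] by blast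
    then have "\<forall>i. divides_in R p (coeff k i)" using irreducible_coeffs_not_divisible[OF f df pc(1)] by blast
    then obtain k' where k': "k' \<in> polys_over R" "k = smult p k'"
      using smult_of_divides_coeffs[OF pR less.prems(4)] by blast
    have "smult p (smult c0 g) = smult p (f * k')"
      using less.prems(5) pc(3) k'(2) by (simp add: mult.commute)
    then have "smult c0 g = f * k'" using smult_cancel[OF pR(2)] by blast
    then show ?thesis using less.hyps[OF pc(4) pc(2) c00 less.prems(3) k'(1)] by blast
  qed
qed

lemma factor_of_smult_eq_mult:
  assumes f: "irreducible_in (polys_over R) f"
  shows "c \<in> R \<Longrightarrow> c \<noteq> 0 \<Longrightarrow> w \<in> polys_over R \<Longrightarrow> q \<in> polys_over R \<Longrightarrow> smult c f = w * q \<Longrightarrow>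
    \<exists>w' q'. w' \<in> polys_over R \<and> q' \<in> polys_over R \<and> f = w' * q' \<and>
      degree w' = degree w \<and> degree q' = degree q"
proof (induction "\<mu> c" arbitrary: c w q rule: less_induct)
  case less
  have fPR: "f \<in> polys_over R" using f by (simp add: irreducible_in_def)
  show ?case
  proof (cases "unit_in R c")
    case True
    then obtain c' where c': "c' \<in> R" "c * c' = 1" by (auto simp: unit_in_def)
    have c'0: "c' \<noteq> 0" using c'(2) by auto
    have "f = smult c' (smult c f)" using c'(2) by (simp add: mult.commute)
    also have "\<dots> = w * smult c' q" using less.prems(5) by simp
    finally show ?thesis using c'(1) c'0 less.prems(3,4) by (intro exI[of _ w] exI[of _ "smult c' q"]) auto
  next
    case False
    obtain p c0 where pc: "prime_in R p" "c0 \<in> R" "c = p * c0" "\<mu> c0 < \<mu> c"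
      using exists_prime_factor[OF less.prems(1,2) False] by blast
    have pR: "p \<in> R" "p \<noteq> 0" using pc(1) by (auto simp: prime_in_def)
    have c00: "c0 \<noteq> 0" using pc(3) less.prems(2) by auto
    have "divides_in R p (coeff (w * q) i)" for i
      using divides_coeff_smult[OF less.prems(1) pR(1) fPR less.prems(5)] pc(2,3) pR(1)
      by (simp add: divides_in_times)
    then have "(\<forall>i. divides_in R p (coeff w i)) \<or> (\<forall>i. divides_in R p (coeff q i))"
      using prime_divides_coeffs_mult[OF pc(1) less.prems(3,4)] by blast
    then show ?thesis
    proof
      assume "\<forall>i. divides_in R p (coeff w i)"
      then obtain w' where w': "w' \<in> polys_over R" "w = smult p w'"
        using smult_of_divides_coeffs[OF pR less.prems(3)] by blast
      have "smult p (smult c0 f) = smult p (w' * q)"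
        using less.prems(5) pc(3) w'(2) by (simp add: mult.commute)
      then have "smult c0 f = w' * q" using smult_cancel[OF pR(2)] by blast
      from less.hyps[OF pc(4) pc(2) c00 w'(1) less.prems(4) this]
      show ?thesis using w'(2) pR(2) by simp
    next
      assume "\<forall>i. divides_in R p (coeff q i)"
      then obtain q' where q': "q' \<in> polys_over R" "q = smult p q'"
        using smult_of_divides_coeffs[OF pR less.prems(4)] by blast
      have "smult p (smult c0 f) = smult p (w * q')"
        using less.prems(5) pc(3) q'(2) by (simp add: mult.commute)
      then have "smult c0 f = w * q'" using smult_cancel[OF pR(2)] by blast
      from less.hyps[OF pc(4) pc(2) c00 less.prems(3) q'(1) this]
      show ?thesis using q'(2) pR(2) by simp
    qed
  qed
qed

lemma pseudo_divmod_exists: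
  assumes w: "w \<in> polys_over R" "w \<noteq> 0"
  shows "a \<in> polys_over R \<Longrightarrow> \<exists>k q r. q \<in> polys_over R \<and> r \<in> polys_over R \<and>
    smult (lead_coeff w ^ k) a = w * q + r \<and> (r = 0 \<or> degree r < degree w)"
proof (induction "degree a" arbitrary: a rule: less_induct)
  case less
  show ?case
  proof (cases "a = 0 \<or> degree a < degree w")
    case True
    then show ?thesis using less.prems by (intro exI[of _ 0] exI[of _ 0] exI[of _ a]) auto
  next
    case False
    then have a0: "a \<noteq> 0" and dw: "degree w \<le> degree a" by auto
    define d where "d = degree a - degree w"
    define a' where "a' = smult (lead_coeff w) a - monom (lead_coeff a) d * w"
    have a'PR: "a' \<in> polys_over R" unfolding a'_def using less.prems w(1)
      by (intro polys_over_diff polys_over_smult polys_over_mult polys_over_monom lead_coeff_mem)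
    have ca': "coeff a' n = 0" if "n \<ge> degree a" for n
    proof (cases "n = degree a")
      case True
      have "coeff (monom (lead_coeff a) d * w) (degree a) = lead_coeff a * lead_coeff w"
        using dw by (simp add: coeff_monom_mult d_def)
      then show ?thesis using True by (simp add: a'_def)
    next
      case False
      then have "n > degree a" using that by simp
      then have "coeff a n = 0" "coeff w (n - d) = 0" using dw
        by (auto simp: coeff_eq_0 d_def)
      then show ?thesis by (simp add: a'_def coeff_monom_mult)
    qed
    have deg: "a' = 0 \<or> degree a' < degree a"
    proof (cases "a' = 0")
      case False
      then have "a' \<noteq> 0" .
      have "degree a' \<le> degree a" using ca' by (intro degree_le) auto
      moreover have "degree a' \<noteq> degree a"
      proof
        assume "degree a' = degree a"
        then have "lead_coeff a' = 0" using ca'[of "degree a"] by simp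
        then show False using \<open>a' \<noteq> 0\<close> by simp
      qed
      ultimately show ?thesis by simp
    qed simp
    have eqa: "smult (lead_coeff w) a = a' + monom (lead_coeff a) d * w" by (simp add: a'_def)
    show ?thesis
    proof (cases "a' = 0")
      case True
      then have "smult (lead_coeff w ^ 1) a = w * monom (lead_coeff a) d + 0" using eqa by (simp add: mult.commute)
      then show ?thesis using less.prems
        by (intro exI[of _ 1] exI[of _ "monom (lead_coeff a) d"] exI[of _ 0])
          (auto intro!: polys_over_monom lead_coeff_mem)
    next
      case False
      then have "degree a' < degree a" using deg by simp
      from less.hyps[OF this a'PR] obtain k q r where
        kqr: "q \<in> polys_over R" "r \<in> polys_over R" "smult (lead_coeff w ^ k) a' = w * q + r"
          "r = 0 \<or> degree r < degree w"
        by blast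
      have "smult (lead_coeff w ^ Suc k) a = smult (lead_coeff w ^ k) (smult (lead_coeff w) a)"
        by (simp add: mult.commute)
      also have "\<dots> = smult (lead_coeff w ^ k) a' + smult (lead_coeff w ^ k) (monom (lead_coeff a) d * w)"
        unfolding eqa by (simp add: smult_add_right)
      also have "\<dots> = w * (q + smult (lead_coeff w ^ k) (monom (lead_coeff a) d)) + r"
        unfolding kqr(3) by (simp add: algebra_simps)
      finally show ?thesis using kqr less.prems w
        by (intro exI[of _ "Suc k"] exI[of _ "q + smult (lead_coeff w ^ k) (monom (lead_coeff a) d)"] exI[of _ r])
           (auto intro!: polys_over_add polys_over_smult subring_power lead_coeff_mem polys_over_monom)
    qed
  qed
qed

lemma irreducible_in_const_coeff:
  assumes f: "irreducible_in (polys_over R) f" and d: "degree f = 0"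
  shows "irreducible_in R (coeff f 0)"
proof -
  have fPR: "f \<in> polys_over R" and f0: "f \<noteq> 0" and fu: "\<not> unit_in (polys_over R) f"
    and fi: "\<forall>a\<in>polys_over R. \<forall>b\<in>polys_over R.
      f = a * b \<longrightarrow> unit_in (polys_over R) a \<or> unit_in (polys_over R) b"
    using f by (auto simp: irreducible_in_def)
  have e: "f = [:coeff f 0:]" using degree_0_id[OF d] by simp
  have "coeff f 0 \<in> R" using fPR by (simp add: coeff_polys_over)
  moreover have "coeff f 0 \<noteq> 0" using f0 e by (metis pCons_0_0)
  moreover have "\<not> unit_in R (coeff f 0)" using fu fPR d by (simp add: unit_in_polys_over_iff)
  moreover have "unit_in R a \<or> unit_in R b" if ab: "a \<in> R" "b \<in> R" "coeff f 0 = a * b" for a b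
  proof -
    have "f = [:a:] * [:b:]" using e ab(3) by simp
    then have "unit_in (polys_over R) [:a:] \<or> unit_in (polys_over R) [:b:]" using fi ab(1,2) by simp
    then show ?thesis by (auto simp: unit_in_polys_over_iff)
  qed
  ultimately show ?thesis by (simp add: irreducible_in_def)
qed

lemma prime_in_polys_over_if_irreducible_const:
  assumes f: "irreducible_in (polys_over R) f" and deg: "degree f = 0"
  shows "prime_in (polys_over R) f"
proof -
  define c where "c = coeff f 0"
  have f_eq: "f = [:c:]" using degree_0_id[OF deg] by (simp add: c_def)
  have c: "prime_in R c" unfolding c_def by (rule irreducible_imp_prime[OF irreducible_in_const_coeff[OF f deg]])
  have cR: "c \<in> R" "c \<noteq> 0" using c by (auto simp: prime_in_def)
  have "divides_in (polys_over R) f g \<or> divides_in (polys_over R) f h"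
    if g: "g \<in> polys_over R" and h: "h \<in> polys_over R" and gh: "divides_in (polys_over R) f (g * h)" for g h
  proof -
    obtain t where t: "t \<in> polys_over R" "g * h = f * t" using gh unfolding divides_in_def by blast
    have "divides_in R c (coeff (g * h) i)" for i
      using t f_eq coeff_polys_over[OF t(1)] cR(1) by (simp add: divides_in_times)
    then have "(\<forall>i. divides_in R c (coeff g i)) \<or> (\<forall>i. divides_in R c (coeff h i))"
      using prime_divides_coeffs_mult[OF c g h] by blast
    then show ?thesis
      using smult_of_divides_coeffs[OF cR g] smult_of_divides_coeffs[OF cR h] f_eq
      by (auto simp: divides_in_def)
  qed
  then show ?thesis using f by (simp add: prime_in_def irreducible_in_def)
qed

text \<open>
  The polynomials over R that lie in the ideal generated by f and g over the fraction field
  of R.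
\<close>

definition combinations :: "'a poly \<Rightarrow> 'a poly \<Rightarrow> 'a poly set" where
  "combinations f g = {w \<in> polys_over R. \<exists>c\<in>R. c \<noteq> 0 \<and>
     (\<exists>u\<in>polys_over R. \<exists>v\<in>polys_over R. smult c w = u * f + v * g)}"

definition frac_divides :: "'a poly \<Rightarrow> 'a poly \<Rightarrow> bool" where
  "frac_divides w a \<longleftrightarrow> (\<exists>c\<in>R. c \<noteq> 0 \<and> (\<exists>q\<in>polys_over R. smult c a = w * q))"

lemma left_mem_combinations: "f \<in> polys_over R \<Longrightarrow> f \<in> combinations f g"
proof -
  have "smult 1 f = 1 * f + 0 * g" by simp
  then show "f \<in> polys_over R \<Longrightarrow> f \<in> combinations f g"
    unfolding combinations_def using subring_one polys_over_1 polys_over_0 one_neq_zero by blast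
qed

lemma right_mem_combinations: "g \<in> polys_over R \<Longrightarrow> g \<in> combinations f g"
proof -
  have "smult 1 g = 0 * f + 1 * g" by simp
  then show "g \<in> polys_over R \<Longrightarrow> g \<in> combinations f g"
    unfolding combinations_def using subring_one polys_over_1 polys_over_0 one_neq_zero by blast
qed

lemma divides_in_if_frac_divides:
  assumes "irreducible_in (polys_over R) f" "degree f > 0" "g \<in> polys_over R" "frac_divides f g"
  shows "divides_in (polys_over R) f g"
  using assms divides_in_of_smult_eq_mult by (auto simp: frac_divides_def)

lemma frac_divides_combinations:
  assumes w: "w \<in> combinations f g" "w \<noteq> 0"
    and least: "\<And>w'. w' \<in> combinations f g \<Longrightarrow> w' \<noteq> 0 \<Longrightarrow> degree w \<le> degree w'"
    and a: "a \<in> combinations f g"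
  shows "frac_divides w a"
proof -
  obtain c u v where wR: "w \<in> polys_over R" and c: "c \<in> R" "c \<noteq> 0"
    and uv: "u \<in> polys_over R" "v \<in> polys_over R" "smult c w = u * f + v * g"
    using w(1) unfolding combinations_def by blast
  obtain c' u' v' where aR: "a \<in> polys_over R" and c': "c' \<in> R" "c' \<noteq> 0"
    and uv': "u' \<in> polys_over R" "v' \<in> polys_over R" "smult c' a = u' * f + v' * g"
    using a unfolding combinations_def by blast
  have lc: "lead_coeff w \<in> R" "lead_coeff w \<noteq> 0" using wR w(2) by (auto intro: lead_coeff_mem)
  obtain k q r where qr: "q \<in> polys_over R" "r \<in> polys_over R"
    "smult (lead_coeff w ^ k) a = w * q + r" "r = 0 \<or> degree r < degree w"
    using pseudo_divmod_exists[OF wR w(2) aR] by blast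
  define d where "d = c * lead_coeff w ^ k"
  have "smult (c * c') r = smult c (smult c' (smult (lead_coeff w ^ k) a)) - smult c' (smult c w * q)"
    using qr(3) by (simp add: algebra_simps smult_add_right)
  also have "\<dots> = smult d (smult c' a) - smult c' ((u * f + v * g) * q)"
    unfolding uv(3) by (simp add: d_def algebra_simps smult_add_right)
  also have "\<dots> = (smult d u' - smult c' (u * q)) * f + (smult d v' - smult c' (v * q)) * g"
    unfolding uv'(3) by (simp add: algebra_simps smult_add_right)
  finally have "r \<in> combinations f g"
    unfolding combinations_def using qr(1,2) c c' lc uv uv'
    by (intro CollectI conjI bexI[of _ "c * c'"] bexI[of _ "smult d u' - smult c' (u * q)"]
        bexI[of _ "smult d v' - smult c' (v * q)"]) (auto simp: d_def intro!: polys_over_diff)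
  then have "r = 0" using least qr(4) by fastforce
  then show ?thesis
    using qr(1,3) lc unfolding frac_divides_def by (intro bexI[of _ "lead_coeff w ^ k"]) auto
qed

lemma prime_in_polys_over_if_irreducible_pos_degree:
  assumes f: "irreducible_in (polys_over R) f" and deg: "degree f > 0"
  shows "prime_in (polys_over R) f"
proof -
  have fR: "f \<in> polys_over R" using f by (simp add: irreducible_in_def)
  have "divides_in (polys_over R) f g \<or> divides_in (polys_over R) f h"
    if g: "g \<in> polys_over R" and h: "h \<in> polys_over R" and gh: "divides_in (polys_over R) f (g * h)" for g h
  proof -
    obtain t where t: "t \<in> polys_over R" "g * h = f * t" using gh unfolding divides_in_def by blast
    have "f \<in> combinations f g" "f \<noteq> 0" using fR f left_mem_combinations by (auto simp: irreducible_in_def)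
    then obtain w where w: "w \<in> combinations f g" "w \<noteq> 0"
      and least: "\<And>w'. w' \<in> combinations f g \<Longrightarrow> w' \<noteq> 0 \<Longrightarrow> degree w \<le> degree w'"
      using ex_has_least_nat[of "\<lambda>w. w \<in> combinations f g \<and> w \<noteq> 0" f degree] by blast
    obtain c u v where wR: "w \<in> polys_over R" and c: "c \<in> R" "c \<noteq> 0"
      and uv: "u \<in> polys_over R" "v \<in> polys_over R" "smult c w = u * f + v * g"
      using w(1) unfolding combinations_def by blast
    obtain c1 q1 where c1: "c1 \<in> R" "c1 \<noteq> 0" and q1: "q1 \<in> polys_over R" "smult c1 f = w * q1"
      using frac_divides_combinations[OF w least left_mem_combinations[OF fR]] unfolding frac_divides_def by blast
    obtain w' q' where wq': "w' \<in> polys_over R" "q' \<in> polys_over R" "f = w' * q'"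
      "degree w' = degree w" "degree q' = degree q1"
      using factor_of_smult_eq_mult[OF f c1 wR q1] by blast
    have "unit_in (polys_over R) w' \<or> unit_in (polys_over R) q'"
      using f wq'(1-3) unfolding irreducible_in_def by blast
    then show ?thesis
    proof
      assume "unit_in (polys_over R) w'"
      then have "degree w = 0" using wq'(4) by (simp add: unit_in_polys_over_iff)
      then obtain e where e: "w = [:e:]" "e \<in> R" "e \<noteq> 0"
        using wR w(2) degree_0_id[of w] coeff_polys_over[OF wR, of 0] by force
      have "smult (c * e) h = f * (u * h + v * t)"
        using arg_cong[OF uv(3), of "\<lambda>p. p * h"] t(2) e(1) by (simp add: algebra_simps)
      then have "frac_divides f h"
        unfolding frac_divides_def using c e uv t h by (intro bexI[of _ "c * e"]) auto
      then show ?thesis using divides_in_if_frac_divides[OF f deg h] by blast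
    next
      assume "unit_in (polys_over R) q'"
      then have "degree q1 = 0" using wq'(5) by (simp add: unit_in_polys_over_iff)
      moreover have "q1 \<noteq> 0" using q1(2) c1 f by (auto simp: irreducible_in_def)
      ultimately obtain e where e: "q1 = [:e:]" "e \<in> R" "e \<noteq> 0"
        using degree_0_id[of q1] coeff_polys_over[OF q1(1), of 0] by force
      obtain c3 q3 where c3: "c3 \<in> R" "c3 \<noteq> 0" and q3: "q3 \<in> polys_over R" "smult c3 g = w * q3"
        using frac_divides_combinations[OF w least right_mem_combinations[OF g]] unfolding frac_divides_def by blast
      have "smult c1 f = smult e w" using q1(2) e(1) by (simp add: mult.commute)
      have "smult (e * c3) g = smult e (smult c3 g)" by simp
      also have "\<dots> = smult e (w * q3)" using q3(2) by simp
      also have "\<dots> = smult c1 f * q3" using \<open>smult c1 f = smult e w\<close> by simp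
      finally have "smult (e * c3) g = f * smult c1 q3" by (simp add: mult.commute)
      then have "frac_divides f g"
        unfolding frac_divides_def using c1 c3 e q3
        by (intro bexI[of _ "e * c3"] conjI bexI[of _ "smult c1 q3"]) auto
      then show ?thesis using divides_in_if_frac_divides[OF f deg g] by blast
    qed
  qed
  then show ?thesis using f by (simp add: prime_in_def irreducible_in_def)
qed

lemma prime_in_polys_over_if_irreducible:
  "irreducible_in (polys_over R) f \<Longrightarrow> prime_in (polys_over R) f"
  using prime_in_polys_over_if_irreducible_const prime_in_polys_over_if_irreducible_pos_degree
  by blast

lemma factorial_subring_polys_over:
  "factorial_subring (polys_over R) (\<lambda>p. degree p + \<mu> (lead_coeff p))"
proof
  show "is_subring (polys_over R)" unfolding is_subring_def by auto
  show "prime_in (polys_over R) p" if "irreducible_in (polys_over R) p" for p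
    using prime_in_polys_over_if_irreducible[OF that] .
  show "degree (a * b) + \<mu> (lead_coeff (a * b)) =
      degree a + \<mu> (lead_coeff a) + (degree b + \<mu> (lead_coeff b))"
    if "a \<in> polys_over R" "b \<in> polys_over R" "a \<noteq> 0" "b \<noteq> 0" for a b
  proof -
    have "\<mu> (lead_coeff (a * b)) = \<mu> (lead_coeff a) + \<mu> (lead_coeff b)"
      unfolding lead_coeff_mult using that by (intro length_mult lead_coeff_mem) auto
    then show ?thesis using degree_mult_eq[OF that(3,4)] by simp
  qed
  show "degree a + \<mu> (lead_coeff a) = 0 \<longleftrightarrow> unit_in (polys_over R) a"
    if "a \<in> polys_over R" "a \<noteq> 0" for a
    using that length_eq_0_iff[OF lead_coeff_mem[OF that(1)]] by (auto simp: unit_in_polys_over_iff)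
qed

context
  fixes \<phi> :: "'a \<Rightarrow> 'b::idom"
  assumes hom_mult: "\<And>x y. \<phi> (x * y) = \<phi> x * \<phi> y"
    and hom_zero: "\<phi> 0 = 0" and hom_one: "\<phi> 1 = 1"
    and inj: "inj_on \<phi> R"
begin

lemma hom_eq_iff: "a \<in> R \<Longrightarrow> b \<in> R \<Longrightarrow> \<phi> a = \<phi> b \<longleftrightarrow> a = b"
  using inj by (auto dest: inj_onD)

lemma unit_in_image_iff:
  assumes "a \<in> R" shows "unit_in (\<phi> ` R) (\<phi> a) \<longleftrightarrow> unit_in R a"
proof -
  have "\<phi> a * \<phi> b = 1 \<longleftrightarrow> a * b = 1" if "b \<in> R" for b
    using hom_eq_iff[of "a * b" 1] assms that by (simp add: hom_mult hom_one subring_mult)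
  then show ?thesis using assms by (auto simp: unit_in_def)
qed

lemma divides_in_image_iff:
  assumes "a \<in> R" "b \<in> R" shows "divides_in (\<phi> ` R) (\<phi> a) (\<phi> b) \<longleftrightarrow> divides_in R a b"
proof -
  have "\<phi> b = \<phi> a * \<phi> c \<longleftrightarrow> b = a * c" if "c \<in> R" for c
    using hom_eq_iff[of b "a * c"] assms that by (simp add: hom_mult subring_mult)
  then show ?thesis by (auto simp: divides_in_def)
qed

lemma irreducible_in_image_iff:
  assumes "a \<in> R" shows "irreducible_in (\<phi> ` R) (\<phi> a) \<longleftrightarrow> irreducible_in R a"
proof -
  have "\<phi> a = \<phi> b * \<phi> c \<longleftrightarrow> a = b * c" if "b \<in> R" "c \<in> R" for b c
    using hom_eq_iff[of a "b * c"] assms that by (simp add: hom_mult subring_mult)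
  moreover have "\<phi> a = 0 \<longleftrightarrow> a = 0" using hom_eq_iff[of a 0] assms by (simp add: hom_zero)
  ultimately show ?thesis using assms by (simp add: irreducible_in_def unit_in_image_iff)
qed

lemma prime_in_image_iff:
  assumes "a \<in> R" shows "prime_in (\<phi> ` R) (\<phi> a) \<longleftrightarrow> prime_in R a"
proof -
  have "\<phi> a = 0 \<longleftrightarrow> a = 0" using hom_eq_iff[of a 0] assms by (simp add: hom_zero)
  then show ?thesis
    using assms by (simp add: prime_in_def unit_in_image_iff divides_in_image_iff
        hom_mult[symmetric] subring_mult)
qed

end

lemma factorial_subring_image:
  fixes \<phi> :: "'a \<Rightarrow> 'b::idom"
  assumes hom_mult: "\<And>x y. \<phi> (x * y) = \<phi> x * \<phi> y" and hom_add: "\<And>x y. \<phi> (x + y) = \<phi> x + \<phi> y"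
    and hom_one: "\<phi> 1 = 1" and inj: "inj_on \<phi> R"
  shows "factorial_subring (\<phi> ` R) (\<mu> \<circ> inv_into R \<phi>)"
proof -
  have "\<phi> 0 = \<phi> 0 + \<phi> 0" using hom_add[of 0 0] by (simp only: add_0)
  then have hom_zero: "\<phi> 0 = 0" by (simp only: add_cancel_right_right)
  have hom_uminus: "\<phi> (- a) = - \<phi> a" for a
    using hom_add[of a "- a"] hom_zero by (simp add: eq_neg_iff_add_eq_0 add.commute)
  have inv: "inv_into R \<phi> (\<phi> a) = a" if "a \<in> R" for a
    using inv_into_f_f[OF inj that] .
  show ?thesis
  proof
    show "is_subring (\<phi> ` R)"
      unfolding is_subring_def
      by (auto simp: hom_mult[symmetric] hom_add[symmetric] hom_uminus[symmetric]
          intro!: image_eqI[of 0 \<phi>] image_eqI[of 1 \<phi>] hom_zero[symmetric] hom_one[symmetric])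
  next
    show "prime_in (\<phi> ` R) b" if "irreducible_in (\<phi> ` R) b" for b
    proof -
      have "b \<in> \<phi> ` R" using that by (simp add: irreducible_in_def)
      then obtain a where a: "a \<in> R" "b = \<phi> a" by blast
      then have "irreducible_in R a"
        using that irreducible_in_image_iff[OF hom_mult hom_zero hom_one inj] by simp
      then show ?thesis
        using a irreducible_imp_prime prime_in_image_iff[OF hom_mult hom_zero hom_one inj] by simp
    qed
  next
    fix b1 b2 assume "b1 \<in> \<phi> ` R" "b2 \<in> \<phi> ` R" "b1 \<noteq> 0" "b2 \<noteq> 0"
    then obtain a1 a2 where a: "a1 \<in> R" "a2 \<in> R" "a1 \<noteq> 0" "a2 \<noteq> 0" "b1 = \<phi> a1" "b2 = \<phi> a2"
      using hom_zero by blast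
    then have "b1 * b2 = \<phi> (a1 * a2)" by (simp add: hom_mult)
    then show "(\<mu> \<circ> inv_into R \<phi>) (b1 * b2) = (\<mu> \<circ> inv_into R \<phi>) b1 + (\<mu> \<circ> inv_into R \<phi>) b2"
      using a by (simp add: inv subring_mult length_mult)
  next
    fix b assume "b \<in> \<phi> ` R" "b \<noteq> 0"
    then obtain a where a: "a \<in> R" "a \<noteq> 0" "b = \<phi> a" using hom_zero by blast
    then show "(\<mu> \<circ> inv_into R \<phi>) b = 0 \<longleftrightarrow> unit_in (\<phi> ` R) b"
      by (simp add: inv length_eq_0_iff unit_in_image_iff[OF hom_mult hom_zero hom_one inj])
  qed
qed

end

section \<open>Factoriality of the symmetric algebra\<close>

lemma Salg_0_eq_const:
  assumes "f \<in> Salg 0" shows "f = single 0 (lookup f 0)"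
proof (rule poly_mapping_eqI)
  fix m :: "nat \<Rightarrow>\<^sub>0 nat"
  show "lookup f m = lookup (single 0 (lookup f 0)) m"
  proof (cases "m = 0")
    case False
    then obtain i where "i \<in> keys m" by (metis keys_eq_empty ex_in_conv)
    then have "m \<notin> keys f" using SalgD[OF assms, of m i] by auto
    then show ?thesis using False by (simp add: in_keys_iff lookup_single)
  qed simp
qed

lemma factorial_subring_Salg_0: "factorial_subring (Salg 0) (\<lambda>_. 0)"
proof -
  have un: "unit_in (Salg 0) a" if "a \<in> Salg 0" "a \<noteq> 0" for a
  proof -
    have e: "a = single 0 (lookup a 0)" by (rule Salg_0_eq_const[OF that(1)])
    then have l0: "lookup a 0 \<noteq> 0" using that(2) by (metis single_zero)
    have "a * single 0 (inverse (lookup a 0)) = single 0 (lookup a 0 * inverse (lookup a 0))"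
      by (subst e) (simp add: mult_single)
    also have "\<dots> = 1" using l0 by simp
    finally show ?thesis
      using that(1) by (auto simp: unit_in_def intro!: bexI[of _ "single 0 (inverse (lookup a 0))"])
  qed
  show ?thesis
  proof
    show "is_subring (Salg 0)" unfolding is_subring_def by (auto intro: Salg_add Salg_mult Salg_uminus)
    show "prime_in (Salg 0) p" if "irreducible_in (Salg 0) p" for p
      using that un by (auto simp: irreducible_in_def)
  qed (use un in auto)
qed

lemma inj_on_poly_Var_Salg: "inj_on (poly_Var n) (polys_over (Salg n))"
proof (rule inj_onI)
  fix p q assume "p \<in> polys_over (Salg n)" "q \<in> polys_over (Salg n)" "poly_Var n p = poly_Var n q"
  moreover have "polys_over (Salg n) \<subseteq> polys_free_of n"
    using Salg_free_of by (auto simp: polys_over_def polys_free_of_def)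
  ultimately show "p = q" using poly_Var_inj by blast
qed

lemma poly_Var_image_Salg: "poly_Var n ` polys_over (Salg n) = Salg (Suc n)"
proof
  show "poly_Var n ` polys_over (Salg n) \<subseteq> Salg (Suc n)"
    using poly_Var_Salg_Suc by (auto simp: polys_over_def)
  show "Salg (Suc n) \<subseteq> poly_Var n ` polys_over (Salg n)"
  proof
    fix f assume "f \<in> Salg (Suc n)"
    then have "poly_in_Var n f \<in> polys_over (Salg n)"
      using coeff_poly_in_Var_Salg by (auto simp: polys_over_def)
    then show "f \<in> poly_Var n ` polys_over (Salg n)"
      using poly_Var_poly_in_Var[of n f] by (metis image_eqI)
  qed
qed

lemma factorial_subring_Salg_Suc:
  assumes "factorial_subring (Salg n) \<mu>"
  shows "\<exists>\<mu>'. factorial_subring (Salg (Suc n)) \<mu>'"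
proof -
  interpret factorial_subring "Salg n" \<mu> by fact
  interpret polys: factorial_subring "polys_over (Salg n)" "\<lambda>p. degree p + \<mu> (lead_coeff p)"
    by (rule factorial_subring_polys_over)
  have "factorial_subring (poly_Var n ` polys_over (Salg n))
          ((\<lambda>p. degree p + \<mu> (lead_coeff p)) \<circ> inv_into (polys_over (Salg n)) (poly_Var n))"
    by (rule polys.factorial_subring_image[OF poly_Var_mult poly_Var_add _ inj_on_poly_Var_Salg])
      (simp add: poly_Var_def)
  then show ?thesis unfolding poly_Var_image_Salg by blast
qed

lemma ex_factorial_subring_Salg: "\<exists>\<mu>. factorial_subring (Salg n) \<mu>"
proof (induction n)
  case 0 then show ?case using factorial_subring_Salg_0 by blast
next
  case (Suc n) then show ?case using factorial_subring_Salg_Suc by blast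
qed

lemma prime_in_Salg_if_irreducible: "irreducible_in (Salg n) p \<Longrightarrow> prime_in (Salg n) p"
  using ex_factorial_subring_Salg[of n] factorial_subring.irreducible_imp_prime by blast

lemma carrier_poly_ring[simp]: "carrier (poly_ring A) = A" by (simp add: poly_ring_def)

lemma mult_poly_ring[simp]: "monoid.mult (poly_ring A) = (*)" by (simp add: poly_ring_def)

lemma one_poly_ring[simp]: "monoid.one (poly_ring A) = 1" by (simp add: poly_ring_def)

lemma zero_poly_ring[simp]: "ring.zero (poly_ring A) = 0" by (simp add: poly_ring_def)

lemma Units_poly_ring_iff: "y \<in> Units (poly_ring A) \<longleftrightarrow> unit_in A (y :: cpoly)"
  by (auto simp: Units_def unit_in_def mult.commute)

lemma irreducible_in_if_ring_irreducible:
  fixes A :: "cpoly set"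
  assumes x: "x \<in> A" and ri: "ring_irreducible\<^bsub>poly_ring A\<^esub> x"
  shows "irreducible_in A x"
proof -
  have x0: "x \<noteq> 0" and irr: "Divisibility.irreducible (poly_ring A) x"
    using ri by (auto simp: ring_irreducible_def)
  have nu: "\<not> unit_in A x" using irr by (simp add: Divisibility.irreducible_def Units_poly_ring_iff)
  have pf: "\<And>b. b \<in> A \<Longrightarrow> properfactor (poly_ring A) b x \<Longrightarrow> unit_in A b"
    using irr by (simp add: Divisibility.irreducible_def Units_poly_ring_iff)
  have "unit_in A a \<or> unit_in A b" if ab: "a \<in> A" "b \<in> A" "x = a * b" for a b
  proof (rule disjCI)
    assume nb: "\<not> unit_in A b"
    have "a divides\<^bsub>poly_ring A\<^esub> x" unfolding factor_def using ab by auto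
    moreover have "\<not> x divides\<^bsub>poly_ring A\<^esub> a"
    proof
      assume "x divides\<^bsub>poly_ring A\<^esub> a"
      then obtain t where t: "t \<in> A" "a = x * t" unfolding factor_def by auto
      have "x * (t * b) = a * b" using t(2) by (simp only: mult.assoc)
      also have "\<dots> = x * 1" using ab(3) by simp
      finally have "t * b = 1" by (simp only: mult_left_cancel[OF x0])
      then have "b * t = 1" by (simp add: mult.commute)
      then show False using nb ab(2) t(1) unfolding unit_in_def by blast
    qed
    ultimately show "unit_in A a" using pf[OF ab(1)] by (simp add: properfactor_def)
  qed
  then show ?thesis using x x0 nu by (simp add: irreducible_in_def)
qed

section \<open>Weight spaces\<close>

lemma eq_add_single_if_minus_single:
  fixes m m' :: "nat \<Rightarrow>\<^sub>0 nat"
  assumes "lookup m' j \<noteq> 0" "m' - single j 1 = m"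
  shows "m' = m + single j 1"
proof (rule poly_mapping_eqI)
  fix i
  have "lookup m i = lookup m' i - (if j = i then 1 else 0)"
    using assms(2)[symmetric] by (simp add: lookup_minus lookup_single when_def)
  then show "lookup m' i = lookup (m + single j 1) i"
    using assms(1) by (auto simp: lookup_add lookup_single when_def)
qed

lemma lookup_pdiff: "lookup (pdiff j f) m = lookup f (m + single j 1) * of_nat (lookup m j + 1)"
proof -
  have "lookup (pdiff j f) m = (\<Sum>m'\<in>keys f. (lookup f m' * of_nat (lookup m' j) when m' - single j 1 = m))"
    by (simp add: pdiff_def lookup_sum lookup_single)
  also have "\<dots> = (\<Sum>m'\<in>keys f. if m' = m + single j 1 then lookup f m' * of_nat (lookup m' j) else 0)"
  proof (rule sum.cong[OF refl])
    fix m' assume "m' \<in> keys f"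
    show "(lookup f m' * of_nat (lookup m' j) when m' - single j 1 = m) =
          (if m' = m + single j 1 then lookup f m' * of_nat (lookup m' j) else 0)"
    proof (cases "m' = m + single j 1")
      case True then show ?thesis by simp
    next
      case False
      then have "lookup m' j = 0 \<or> m' - single j 1 \<noteq> m" using eq_add_single_if_minus_single by blast
      then show ?thesis using False by (auto simp: when_def)
    qed
  qed
  also have "\<dots> = (if m + single j 1 \<in> keys f
      then lookup f (m + single j 1) * of_nat (lookup (m + single j 1) j) else 0)"
    by (simp add: sum.delta')
  also have "\<dots> = lookup f (m + single j 1) * of_nat (lookup m j + 1)"
    by (auto simp: in_keys_iff lookup_add)
  finally show ?thesis .
qed

lemma lookup_of_nat_mult: "lookup (of_nat k * c) m = of_nat k * lookup (c :: cpoly) m"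
proof -
  have eq: "(of_nat k :: cpoly) = single 0 (of_nat k)" by simp
  have A: "lookup (c * single 0 (of_nat k)) m = lookup c m * of_nat k" by (subst lookup_mult_single) simp
  have B: "of_nat k * c = c * single 0 (of_nat k)" by (simp add: mult.commute)
  show ?thesis unfolding B A by (rule mult.commute)
qed

lemma pdiff_poly_Var:
  assumes "p \<in> polys_free_of j"
  shows "pdiff j (poly_Var j p) = poly_Var j (pderiv p)"
proof (rule poly_mapping_eqI)
  fix m :: "nat \<Rightarrow>\<^sub>0 nat"
  have e: "m + single j (Suc 0) - single j (Suc (lookup m j)) = m - single j (lookup m j)"
    by (rule poly_mapping_eqI) (simp add: lookup_add lookup_minus lookup_single when_def)
  show "lookup (pdiff j (poly_Var j p)) m = lookup (poly_Var j (pderiv p)) m"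
    unfolding lookup_pdiff lookup_poly_Var[OF assms] lookup_poly_Var[OF polys_free_of_pderiv[OF assms]]
    by (simp add: lookup_add e coeff_pderiv lookup_of_nat_mult del: of_nat_Suc)
qed

text \<open>The Leibniz rule for pdiff j is inherited from pderiv through poly_Var j.\<close>

lemma pdiff_mult: "pdiff j (f * g) = pdiff j f * g + f * pdiff j g"
proof -
  obtain p where p: "p \<in> polys_free_of j" "poly_Var j p = f" using poly_Var_surj by blast
  obtain q where q: "q \<in> polys_free_of j" "poly_Var j q = g" using poly_Var_surj by blast
  have "pdiff j (f * g) = pdiff j (poly_Var j (p * q))" using p q by (simp add: poly_Var_mult)
  also have "\<dots> = poly_Var j (pderiv (p * q))" by (rule pdiff_poly_Var[OF polys_free_of_mult[OF p(1) q(1)]])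
  also have "\<dots> = poly_Var j (pderiv p) * poly_Var j q + poly_Var j p * poly_Var j (pderiv q)"
    by (simp add: pderiv_mult poly_Var_add poly_Var_mult algebra_simps)
  also have "\<dots> = pdiff j f * g + f * pdiff j g"
  proof -
    have "pdiff j f = poly_Var j (pderiv p)" using pdiff_poly_Var[OF p(1)] p(2) by simp
    moreover have "pdiff j g = poly_Var j (pderiv q)" using pdiff_poly_Var[OF q(1)] q(2) by simp
    ultimately show ?thesis using p q by simp
  qed
  finally show ?thesis .
qed

lemma add_single_Suc_neq_0: "(m :: nat \<Rightarrow>\<^sub>0 nat) + single j (Suc 0) \<noteq> 0"
proof
  assume "m + single j (Suc 0) = 0"
  then have "lookup (m + single j (Suc 0)) j = 0" by simp
  then show False by (simp add: lookup_add)
qed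

lemma pdiff_const: "pdiff j (single 0 a) = 0"
proof (rule poly_mapping_eqI)
  fix m :: "nat \<Rightarrow>\<^sub>0 nat"
  have "0 \<noteq> m + single j (Suc 0)" using add_single_Suc_neq_0[of m j] by auto
  then have "lookup (single 0 a) (m + single j 1) = 0" by (simp add: lookup_single)
  then show "lookup (pdiff j (single 0 a)) m = lookup 0 m"
    by (simp add: lookup_pdiff)
qed

lemma adS_mult: "adS n c i (f * g) = adS n c i f * g + f * adS n c i g"
  unfolding adS_def pdiff_mult by (simp add: algebra_simps sum.distrib sum_distrib_left sum_distrib_right)

lemma adS_const: "adS n c i (single 0 a) = 0"
  unfolding adS_def pdiff_const by simp

lemma weight_space_Salg: "f \<in> weight_space n c mu \<Longrightarrow> f \<in> Salg n"
  by (simp add: weight_space_def)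

lemma zero_weight_space[simp]: "0 \<in> weight_space n c mu"
proof -
  have "adS n c i 0 = 0" for i using adS_const[of n c i 0] by simp
  then show ?thesis by (simp add: weight_space_def)
qed

lemma weight_space_mult:
  assumes a: "a \<in> weight_space n c mu" and b: "b \<in> weight_space n c nu"
  shows "a * b \<in> weight_space n c (\<lambda>i. mu i + nu i)"
proof -
  have "a * b \<in> Salg n" using a b by (intro Salg_mult weight_space_Salg)
  moreover have "adS n c i (a * b) = single 0 (mu i + nu i) * (a * b)" if "i < n" for i
  proof -
    have "adS n c i (a * b) = single 0 (mu i) * a * b + a * (single 0 (nu i) * b)"
      using a b that by (simp add: adS_mult weight_space_def)
    also have "\<dots> = single 0 (mu i + nu i) * (a * b)" by (simp add: single_add algebra_simps)
    finally show ?thesis .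
  qed
  ultimately show ?thesis by (simp add: weight_space_def)
qed

lemma Yinv_weight_space_mult:
  assumes "a \<in> Yinv n c" "b \<in> weight_space n c mu"
  shows "a * b \<in> weight_space n c mu"
  using weight_space_mult[OF assms[unfolded Yinv_def]] by simp

lemma weight_space_neg_mult:
  assumes "a \<in> weight_space n c lam" "b \<in> weight_space n c (\<lambda>i. - lam i)"
  shows "a * b \<in> Yinv n c"
  using weight_space_mult[OF assms] by (simp add: Yinv_def)

lemma weight_space_neg_if_mult_Yinv:
  assumes x: "x \<in> weight_space n c lam" "x \<noteq> 0" and h: "h \<in> Salg n" and xh: "x * h \<in> Yinv n c"
  shows "h \<in> weight_space n c (\<lambda>i. - lam i)"
proof -
  have "adS n c i h = single 0 (- lam i) * h" if "i < n" for i
  proof -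
    have "0 = adS n c i (x * h)" using xh that by (simp add: Yinv_def weight_space_def)
    also have "\<dots> = single 0 (lam i) * x * h + x * adS n c i h"
      using x that by (simp add: adS_mult weight_space_def)
    also have "\<dots> = x * (adS n c i h - single 0 (- lam i) * h)"
      by (simp add: algebra_simps single_uminus)
    finally have "x * (adS n c i h - single 0 (- lam i) * h) = 0" by simp
    then show ?thesis using x(2) by simp
  qed
  then show ?thesis using h by (simp add: weight_space_def)
qed

lemma Yinv_Salg: "a \<in> Yinv n c \<Longrightarrow> a \<in> Salg n"
  by (simp add: Yinv_def weight_space_def)

lemma Yinv_mult: "a \<in> Yinv n c \<Longrightarrow> b \<in> Yinv n c \<Longrightarrow> a * b \<in> Yinv n c"
  using Yinv_weight_space_mult[of a n c b "\<lambda>_. 0"] by (simp add: Yinv_def)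

lemma Yinv_one: "1 \<in> Yinv n c"
proof -
  have "adS n c i 1 = 0" for i using adS_const[of n c i 1] by simp
  then show ?thesis by (simp add: Yinv_def weight_space_def)
qed

lemma Yinv_zero: "0 \<in> Yinv n c" by (simp add: Yinv_def)

lemma foldr_mult_Yinv: "set fs \<subseteq> Yinv n c \<Longrightarrow> foldr (*) fs 1 \<in> Yinv n c"
  by (induction fs) (auto intro: Yinv_mult Yinv_one)

section \<open>Weight spaces of a prime semi-invariant\<close>

lemma not_prime_in_divides_unit:
  assumes "prime_in A x" "divides_in A x a" "a * b = 1" "b \<in> A"
    and mult_closed: "\<And>u v. u \<in> A \<Longrightarrow> v \<in> A \<Longrightarrow> u * v \<in> A"
  shows False
proof -
  obtain t where "t \<in> A" "a = x * t" using assms(2) by (auto simp: divides_in_def)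
  then have "x * (t * b) = 1" "t * b \<in> A" using assms(3,4) mult_closed by (auto simp: mult.assoc)
  then show False using assms(1) by (auto simp: prime_in_def unit_in_def)
qed

lemma prime_in_Salg_divides_foldr:
  assumes x: "prime_in (Salg n) x" and fs: "set fs \<subseteq> Yinv n c"
    and dvd: "divides_in (Salg n) x (foldr (*) fs 1)"
  shows "\<exists>q\<in>set fs. divides_in (Salg n) x q \<and> divides_in (Yinv n c) q (foldr (*) fs 1)"
  using fs dvd
proof (induction fs)
  case Nil
  then show ?case
    using not_prime_in_divides_unit[OF x _ _ Salg_1] Salg_mult by fastforce
next
  case (Cons q fs)
  have q: "q \<in> Yinv n c" and fs: "set fs \<subseteq> Yinv n c" using Cons.prems(1) by auto
  have "divides_in (Salg n) x q \<or> divides_in (Salg n) x (foldr (*) fs 1)"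
    using x Cons.prems(2) Yinv_Salg[OF q] Yinv_Salg[OF foldr_mult_Yinv[OF fs]]
    by (auto simp: prime_in_def)
  then show ?case
  proof
    assume "divides_in (Salg n) x q"
    then show ?thesis using foldr_mult_Yinv[OF fs] by (auto simp: divides_in_def)
  next
    assume "divides_in (Salg n) x (foldr (*) fs 1)"
    then obtain q' where q': "q' \<in> set fs" "divides_in (Salg n) x q'"
      "divides_in (Yinv n c) q' (foldr (*) fs 1)"
      using Cons.IH[OF fs] by blast
    then obtain t where t: "t \<in> Yinv n c" "foldr (*) fs 1 = q' * t" by (auto simp: divides_in_def)
    have "foldr (*) (q # fs) 1 = q' * (q * t)" using t(2) by (simp add: algebra_simps)
    then have "divides_in (Yinv n c) q' (foldr (*) (q # fs) 1)"
      using Yinv_mult[OF q t(1)] by (auto simp: divides_in_def)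
    then show ?thesis using q'(1,2) by auto
  qed
qed

locale prime_semi_invariant =
  fixes n :: nat and c :: "nat \<Rightarrow> nat \<Rightarrow> nat \<Rightarrow> complex"
    and lam :: "nat \<Rightarrow> complex" and x :: cpoly
  assumes factorial: "factorial_domain (poly_ring (Yinv n c))"
    and weight: "x \<in> weight_space n c lam" and nonzero: "x \<noteq> 0"
    and prime: "prime_in (Salg n) x"
begin

abbreviation Y_mult where "Y_mult \<equiv> mult_of (poly_ring (Yinv n c))"

definition prime_multiples :: "cpoly set" where
  "prime_multiples = {q \<in> Yinv n c. q \<noteq> 0 \<and> Divisibility.prime Y_mult q \<and> divides_in (Salg n) x q}"

lemma prime_multiple_eq_mult:
  assumes "q \<in> prime_multiples"
  obtains h where "h \<in> weight_space n c (\<lambda>i. - lam i)" "h \<noteq> 0" "q = x * h"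
proof -
  obtain h where h: "h \<in> Salg n" "q = x * h"
    using assms unfolding prime_multiples_def divides_in_def by blast
  then have "h \<in> weight_space n c (\<lambda>i. - lam i)"
    using assms weight_space_neg_if_mult_Yinv[OF weight nonzero] by (simp add: prime_multiples_def)
  moreover have "h \<noteq> 0" using assms h(2) by (auto simp: prime_multiples_def)
  ultimately show thesis using that h(2) by blast
qed

lemma exists_prime_multiple_dividing:
  assumes a: "a \<in> Yinv n c" "a \<noteq> 0" and dvd: "divides_in (Salg n) x a"
  shows "\<exists>q\<in>prime_multiples. divides_in (Yinv n c) q a"
proof -
  interpret factorial_monoid Y_mult using factorial by (simp add: factorial_domain_def)
  obtain fs where fs: "set fs \<subseteq> carrier Y_mult" "wfactors Y_mult fs a"
    using wfactors_exist[of a] a by auto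
  have fs_Y: "set fs \<subseteq> Yinv n c" using fs(1) by auto
  have assoc: "foldr (*) fs 1 \<sim>\<^bsub>Y_mult\<^esub> a" using fs(2) by (simp add: wfactors_def)
  obtain u where u: "u \<in> Yinv n c" "a = foldr (*) fs 1 * u"
    using assoc unfolding associated_def factor_def by auto
  obtain v where v: "v \<in> Yinv n c" "foldr (*) fs 1 = a * v"
    using assoc unfolding associated_def factor_def by auto
  have "a * (v * u) = a * 1" using u(2) v(2) by (simp add: mult.assoc mult.commute)
  then have unit: "u * v = 1" using a(2) by (simp add: mult.commute)
  have "divides_in (Salg n) x (foldr (*) fs 1) \<or> divides_in (Salg n) x u"
    using prime dvd u Yinv_Salg[OF foldr_mult_Yinv[OF fs_Y]] Yinv_Salg[OF u(1)]
    by (auto simp: prime_in_def)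
  moreover have "\<not> divides_in (Salg n) x u"
    using not_prime_in_divides_unit[OF prime _ unit Yinv_Salg[OF v(1)] Salg_mult] by blast
  ultimately obtain q t where q: "q \<in> set fs" "divides_in (Salg n) x q"
    and t: "t \<in> Yinv n c" "foldr (*) fs 1 = q * t"
    using prime_in_Salg_divides_foldr[OF prime fs_Y] by (auto simp: divides_in_def)
  have "Divisibility.prime Y_mult q"
    using q(1) fs irreducible_prime[of q] by (auto simp: wfactors_def)
  then have "q \<in> prime_multiples" using q fs(1) by (auto simp: prime_multiples_def)
  moreover have "a = q * (t * u)" using u(2) t(2) by (simp add: mult.assoc)
  ultimately show ?thesis using Yinv_mult[OF t(1) u(1)] by (auto simp: divides_in_def)
qed

lemma neg_weight_space_factor:
  assumes g: "g \<in> weight_space n c (\<lambda>i. - lam i)" "g \<noteq> 0"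
  shows "\<exists>q\<in>prime_multiples. \<exists>h r. h \<in> weight_space n c (\<lambda>i. - lam i) \<and> q = x * h \<and>
           r \<in> Yinv n c \<and> g = h * r"
proof -
  have "x * g \<in> Yinv n c" using weight_space_neg_mult[OF weight g(1)] .
  moreover have "x * g \<noteq> 0" using nonzero g(2) by simp
  moreover have "divides_in (Salg n) x (x * g)"
    using weight_space_Salg[OF g(1)] by (auto simp: divides_in_def)
  ultimately have "\<exists>q\<in>prime_multiples. divides_in (Yinv n c) q (x * g)"
    by (rule exists_prime_multiple_dividing)
  then obtain q r where q: "q \<in> prime_multiples" and r: "r \<in> Yinv n c" "x * g = q * r"
    by (auto simp: divides_in_def)
  obtain h where h: "h \<in> weight_space n c (\<lambda>i. - lam i)" "q = x * h"
    using prime_multiple_eq_mult[OF q] by blast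
  have "x * g = x * (h * r)" using r(2) h(2) by (simp add: mult.assoc)
  then have "g = h * r" using nonzero by simp
  then show ?thesis using q h r(1) by blast
qed

lemma free_neg_weight_space_if_prime_multiples_associated:
  assumes assoc: "\<And>q1 q2. q1 \<in> prime_multiples \<Longrightarrow> q2 \<in> prime_multiples \<Longrightarrow> divides_in (Yinv n c) q1 q2"
    and g0: "g0 \<in> weight_space n c (\<lambda>i. - lam i)" "g0 \<noteq> 0"
  shows "free_rank_le_1 (Yinv n c) (weight_space n c (\<lambda>i. - lam i))"
proof -
  obtain q0 where q0: "q0 \<in> prime_multiples" using neg_weight_space_factor[OF g0] by blast
  obtain h0 where h0: "h0 \<in> weight_space n c (\<lambda>i. - lam i)" "h0 \<noteq> 0" "q0 = x * h0"
    using prime_multiple_eq_mult[OF q0] by blast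
  have "g \<in> {a * h0 |a. a \<in> Yinv n c}" if g: "g \<in> weight_space n c (\<lambda>i. - lam i)" for g
  proof (cases "g = 0")
    case True
    then show ?thesis using Yinv_zero by force
  next
    case False
    then obtain q h r where q: "q \<in> prime_multiples" and hr: "q = x * h" "r \<in> Yinv n c" "g = h * r"
      using neg_weight_space_factor[OF g] by blast
    obtain t where t: "t \<in> Yinv n c" "q = q0 * t" using assoc[OF q0 q] by (auto simp: divides_in_def)
    have "x * h = x * (h0 * t)" using t(2) hr(1) h0(3) by (simp add: mult.assoc)
    then have "g = (t * r) * h0" using nonzero hr(3) by (simp add: algebra_simps)
    then show ?thesis using Yinv_mult[OF t(1) hr(2)] by blast
  qed
  then have "weight_space n c (\<lambda>i. - lam i) = {a * h0 |a. a \<in> Yinv n c}"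
    using Yinv_weight_space_mult[OF _ h0(1)] by blast
  then show ?thesis unfolding free_rank_le_1_def using h0(1,2) by auto
qed

lemma free_weight_space_if_prime_multiples_not_associated:
  assumes q1: "q1 \<in> prime_multiples" and q2: "q2 \<in> prime_multiples"
    and not_dvd: "\<not> divides_in (Yinv n c) q1 q2"
  shows "free_rank_le_1 (Yinv n c) (weight_space n c lam)"
proof -
  obtain h1 where h1: "h1 \<in> weight_space n c (\<lambda>i. - lam i)" "h1 \<noteq> 0" "q1 = x * h1"
    using prime_multiple_eq_mult[OF q1] by blast
  obtain h2 where h2: "h2 \<in> weight_space n c (\<lambda>i. - lam i)" "h2 \<noteq> 0" "q2 = x * h2"
    using prime_multiple_eq_mult[OF q2] by blast
  have "f \<in> {a * x |a. a \<in> Yinv n c}" if f: "f \<in> weight_space n c lam" for f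
  proof (cases "f = 0")
    case True
    then show ?thesis using Yinv_zero by force
  next
    case False
    have f1: "f * h1 \<in> Yinv n c - {0}" and f2: "f * h2 \<in> Yinv n c - {0}"
      using weight_space_neg_mult[OF f h1(1)] weight_space_neg_mult[OF f h2(1)] False h1(2) h2(2)
      by auto
    have "q2 * (f * h1) = q1 * (f * h2)" using h1(3) h2(3) by (simp add: algebra_simps)
    then have "q1 divides\<^bsub>Y_mult\<^esub> (q2 * (f * h1))"
      unfolding factor_def using f2 by (intro bexI[of _ "f * h2"]) auto
    then have "q1 divides\<^bsub>Y_mult\<^esub> q2 \<or> q1 divides\<^bsub>Y_mult\<^esub> (f * h1)"
      using q1 q2 f1 unfolding prime_multiples_def Divisibility.prime_def by auto
    moreover have "\<not> q1 divides\<^bsub>Y_mult\<^esub> q2"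
      using not_dvd unfolding factor_def divides_in_def by auto
    ultimately obtain a where a: "a \<in> Yinv n c" "f * h1 = q1 * a" unfolding factor_def by auto
    have "h1 * f = h1 * (a * x)" using a(2) h1(3) by (simp add: algebra_simps)
    then have "f = a * x" using h1(2) by simp
    then show ?thesis using a(1) by blast
  qed
  then have "weight_space n c lam = {a * x |a. a \<in> Yinv n c}"
    using Yinv_weight_space_mult[OF _ weight] by blast
  then show ?thesis unfolding free_rank_le_1_def using weight nonzero by auto
qed

lemma free_weight_space_or_free_neg_weight_space:
  "free_rank_le_1 (Yinv n c) (weight_space n c lam) \<or>
   free_rank_le_1 (Yinv n c) (weight_space n c (\<lambda>i. - lam i))"
proof (cases "weight_space n c (\<lambda>i. - lam i) = {0}")
  case True
  then show ?thesis by (simp add: free_rank_le_1_def)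
next
  case False
  then obtain g0 where "g0 \<in> weight_space n c (\<lambda>i. - lam i)" "g0 \<noteq> 0"
    using zero_weight_space by blast
  then show ?thesis
    using free_neg_weight_space_if_prime_multiples_associated
      free_weight_space_if_prime_multiples_not_associated by blast
qed

end

theorem mainTheorem8:
  fixes n :: nat and c :: "nat \<Rightarrow> nat \<Rightarrow> nat \<Rightarrow> complex"
    and lam :: "nat \<Rightarrow> complex" and x :: cpoly
  assumes "lie_structure n c"
    and "factorial_domain (poly_ring (Yinv n c))"
    and "x \<in> weight_space n c lam" and "x \<noteq> 0"
    and "ring_irreducible\<^bsub>poly_ring (Salg n)\<^esub> x"
    and "\<exists>i<n. lam i \<noteq> 0"
  shows "free_rank_le_1 (Yinv n c) (weight_space n c lam) \<or>
         free_rank_le_1 (Yinv n c) (weight_space n c (\<lambda>i. - lam i))"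
proof -
  have "prime_in (Salg n) x"
    using assms(3,5) prime_in_Salg_if_irreducible irreducible_in_if_ring_irreducible weight_space_Salg
    by blast
  with assms(2-4) interpret prime_semi_invariant n c lam x
    by (simp add: prime_semi_invariant_def)
  show ?thesis by (rule free_weight_space_or_free_neg_weight_space)
qed

end
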